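(* Let $G\leq\operatorname{Homeo}(\mathfrak{C})$. If $G$ is vigorous then $G$ is lawless, i.e., there is no non-trivial freely reduced word $w$ in letters $x_1^{\pm1},\dots,x_j^{\pm 1}$ such that $w(g_1,\dots,g_j)=1_G$ for all $(g_1,\dots,g_j)\in G^j$.
   Context: $\mathfrak{C}$ denotes a Cantor space (a space homeomorphic to $\{0,1\}^\omega$). For $\gamma\in\operatorname{Homeo}(\mathfrak{C})$, $\operatorname{supp}(\gamma)=\{p\in\mathfrak{C}: p\gamma\neq p\}$ (right actions). A subset $S\subseteq \operatorname{Homeo}(\mathfrak{C})$ is vigorous if for all clopen $A,B,C\subseteq\mathfrak{C}$ with $B,C$ non-empty proper subsets of $A$ there is $\gamma\in S$ with $\operatorname{supp}(\gamma)\subseteq A$ and $B\gamma\subseteq C$. *)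

theory Defs
  imports "HOL-Analysis.Analysis"
begin

definition cantor :: "(nat \<Rightarrow> bool) topology" where
  "cantor = product_topology (\<lambda>_. discrete_topology UNIV) UNIV"

type_synonym cpt = "nat \<Rightarrow> bool"

definition Homeo_C :: "(cpt \<Rightarrow> cpt) set" where
  "Homeo_C = {f. homeomorphic_map cantor cantor f}"

text \<open>Right actions: the product g*h acts as p(gh) = (pg)h, i.e. the function h o g.\<close>
definition cmult :: "(cpt \<Rightarrow> cpt) \<Rightarrow> (cpt \<Rightarrow> cpt) \<Rightarrow> (cpt \<Rightarrow> cpt)" where
  "cmult g h = h \<circ> g"

definition homeo_subgroup :: "(cpt \<Rightarrow> cpt) set \<Rightarrow> bool" where
  "homeo_subgroup G \<longleftrightarrow> G \<subseteq> Homeo_C \<and> id \<in> G \<and>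
     (\<forall>g\<in>G. \<forall>h\<in>G. cmult g h \<in> G) \<and> (\<forall>g\<in>G. inv g \<in> G)"

definition supp :: "(cpt \<Rightarrow> cpt) \<Rightarrow> cpt set" where
  "supp \<gamma> = {p \<in> topspace cantor. \<gamma> p \<noteq> p}"

definition clopen_C :: "cpt set \<Rightarrow> bool" where
  "clopen_C A \<longleftrightarrow> openin cantor A \<and> closedin cantor A"

definition vigorous :: "(cpt \<Rightarrow> cpt) set \<Rightarrow> bool" where
  "vigorous S \<longleftrightarrow> (\<forall>A B C. clopen_C A \<and> clopen_C B \<and> clopen_C C \<and>
      B \<noteq> {} \<and> C \<noteq> {} \<and> B \<subset> A \<and> C \<subset> A \<longrightarrow>
      (\<exists>\<gamma>\<in>S. supp \<gamma> \<subseteq> A \<and> \<gamma> ` B \<subseteq> C))"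

text \<open>Words in letters x_i^{+-1}: a letter is (i, True) for x_i and (i, False) for x_i^{-1}.\<close>
type_synonym letter = "nat \<times> bool"

fun freely_reduced :: "letter list \<Rightarrow> bool" where
  "freely_reduced [] = True"
| "freely_reduced [_] = True"
| "freely_reduced (a # b # w) \<longleftrightarrow> \<not> (fst a = fst b \<and> snd a \<noteq> snd b) \<and> freely_reduced (b # w)"

fun word_eval :: "(nat \<Rightarrow> cpt \<Rightarrow> cpt) \<Rightarrow> letter list \<Rightarrow> cpt \<Rightarrow> cpt" where
  "word_eval g [] = id"
| "word_eval g (a # w) = cmult (if snd a then g (fst a) else inv (g (fst a))) (word_eval g w)"

definition lawless :: "(cpt \<Rightarrow> cpt) set \<Rightarrow> bool" where
  "lawless G \<longleftrightarrow> \<not> (\<exists>j w. w \<noteq> [] \<and> freely_reduced w \<and> (\<forall>a\<in>set w. fst a < j) \<and>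
      (\<forall>g. (\<forall>i<j. g i \<in> G) \<longrightarrow> word_eval g w = id))"

end

theory Submission
  imports Defs
begin

text \<open>Ping-pong. Pick pairwise disjoint nonempty clopen sets \<open>X\<^sub>a\<close>, one for each
  letter \<open>a = x\<^sub>i\<^sup>\<plusminus>\<^sup>1\<close>, together with a point \<open>p\<close> outside all of them. Vigour
  provides \<open>g\<^sub>i \<in> G\<close> mapping the complement of \<open>X(x\<^sub>i\<^sup>-\<^sup>1)\<close> into \<open>X(x\<^sub>i)\<close>, and then
  \<open>g\<^sub>i\<^sup>-\<^sup>1\<close> maps the complement of \<open>X(x\<^sub>i)\<close> into \<open>X(x\<^sub>i\<^sup>-\<^sup>1)\<close>. Reading a freely reduced
  word letter by letter, \<open>p\<close> is moved into \<open>X\<close> of the first letter and from then on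
  always into \<open>X\<close> of the current letter, so \<open>w(g\<^sub>1,\<dots>,g\<^sub>j)\<close> moves \<open>p\<close> and is not
  the identity.\<close>

lemma topspace_cantor [simp]: "topspace cantor = UNIV"
  by (simp add: cantor_def)

lemma clopen_C_UNIV: "clopen_C UNIV"
  by (metis clopen_C_def closedin_topspace openin_topspace topspace_cantor)

lemma clopen_C_cylinder: "clopen_C {p. \<forall>m<k. p m = f m}"
proof (induction k)
  case 0
  then show ?case by (simp add: clopen_C_UNIV)
next
  case (Suc k)
  have proj: "continuous_map cantor (discrete_topology UNIV) (\<lambda>p. p k)"
    unfolding cantor_def by (rule continuous_map_product_projection) simp
  have "openin cantor {p. p k = f k}" "closedin cantor {p. p k = f k}"
    using openin_continuous_map_preimage[OF proj, of "{f k}"]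
      closedin_continuous_map_preimage[OF proj, of "{f k}"] by simp_all
  moreover have "{p. \<forall>m<Suc k. p m = f m} = {p. \<forall>m<k. p m = f m} \<inter> {p. p k = f k}"
    by (auto simp: less_Suc_eq)
  ultimately show ?case
    using Suc by (auto simp: clopen_C_def intro: openin_Int closedin_Int)
qed

definition first_one :: "nat \<Rightarrow> cpt set" where
  "first_one k = {p. \<forall>m\<le>k. p m = (m = k)}"

lemma clopen_C_first_one: "clopen_C (first_one k)"
  using clopen_C_cylinder[of "Suc k" "\<lambda>m. m = k"] by (simp add: first_one_def less_Suc_eq_le)

lemma indicator_in_first_one: "(\<lambda>m. m = k) \<in> first_one k"
  by (simp add: first_one_def)

lemma first_one_disjoint: "k \<noteq> l \<Longrightarrow> first_one k \<inter> first_one l = {}"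
  unfolding first_one_def by (auto dest: spec[of _ "min k l"])

lemma homeo_subgroup_surj: "homeo_subgroup G \<Longrightarrow> g \<in> G \<Longrightarrow> surj g"
  unfolding homeo_subgroup_def Homeo_C_def
  by (metis homeomorphic_imp_surjective_map mem_Collect_eq subsetD topspace_cantor)

lemma vigorous_maps_compl_into:
  assumes "vigorous G" "clopen_C X" "clopen_C Y" "X \<noteq> {}" "Y \<noteq> {}" "X \<inter> Y = {}"
  obtains \<gamma> where "\<gamma> \<in> G" "\<gamma> ` (- Y) \<subseteq> X"
proof -
  have "clopen_C (- Y)"
    using \<open>clopen_C Y\<close> openin_diff[of cantor UNIV Y] closedin_diff[of cantor UNIV Y]
    by (simp add: clopen_C_def Compl_eq_Diff_UNIV clopen_C_UNIV[unfolded clopen_C_def])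
  moreover have "- Y \<noteq> {}" "- Y \<subset> UNIV" "X \<subset> UNIV"
    using assms(4-6) by auto
  ultimately show ?thesis
    using assms(1,2,4) that clopen_C_UNIV unfolding vigorous_def by blast
qed

lemma inv_image_compl_subset:
  assumes "surj f" "f ` (- Y) \<subseteq> X"
  shows "inv f ` (- X) \<subseteq> Y"
  using assms by (auto simp: surj_f_inv_f)

definition letter_inv :: "letter \<Rightarrow> letter" where
  "letter_inv a = (fst a, \<not> snd a)"

definition letter_map :: "(nat \<Rightarrow> cpt \<Rightarrow> cpt) \<Rightarrow> letter \<Rightarrow> cpt \<Rightarrow> cpt" where
  "letter_map g a = (if snd a then g (fst a) else inv (g (fst a)))"

lemma word_eval_Cons_apply: "word_eval g (a # w) p = word_eval g w (letter_map g a p)"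
  by (simp add: cmult_def letter_map_def)

lemma word_eval_pingpong:
  assumes disjoint: "\<And>a b. a \<noteq> b \<Longrightarrow> X a \<inter> X b = {}"
    and maps: "\<And>a. letter_map g a ` (- X (letter_inv a)) \<subseteq> X a"
  shows "w \<noteq> [] \<Longrightarrow> freely_reduced w \<Longrightarrow> p \<notin> X (letter_inv (hd w)) \<Longrightarrow>
    word_eval g w p \<in> X (last w)"
proof (induction w arbitrary: p rule: freely_reduced.induct)
  case 1
  then show ?case by simp
next
  case (2 a)
  then show ?case
    using maps[of a] by (auto simp: word_eval_Cons_apply simp del: word_eval.simps(2))
next
  case (3 a b w)
  have "letter_map g a p \<in> X a"
    using "3.prems"(3) maps[of a] by auto
  moreover have "X a \<inter> X (letter_inv b) = {}"
    using "3.prems"(2) by (intro disjoint) (auto simp: letter_inv_def)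
  ultimately have "letter_map g a p \<notin> X (letter_inv b)"
    by blast
  then have "word_eval g (b # w) (letter_map g a p) \<in> X (last (b # w))"
    using "3.IH" "3.prems"(2) by (simp del: word_eval.simps(2))
  then show ?case
    by (simp add: word_eval_Cons_apply del: word_eval.simps(2))
qed

lemma word_eval_pingpong_not_id:
  assumes "\<And>a b. a \<noteq> b \<Longrightarrow> X a \<inter> X b = {}"
    and "\<And>a. letter_map g a ` (- X (letter_inv a)) \<subseteq> X a"
    and "\<And>a. p \<notin> X a"
    and "w \<noteq> []" "freely_reduced w"
  shows "word_eval g w \<noteq> id"
proof -
  have "word_eval g w p \<in> X (last w)"
    using word_eval_pingpong[of X g w p] assms by blast
  then show ?thesis
    using assms(3) by (metis id_apply)
qed

theorem theorem1p2:
  assumes "homeo_subgroup G" and "vigorous G"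
  shows "lawless G"
proof -
  define X where "X a = first_one (Suc (2 * fst a + (if snd a then 0 else 1)))" for a
  have X_disjoint: "X a \<inter> X b = {}" if "a \<noteq> b" for a b
    unfolding X_def using that by (intro first_one_disjoint) (auto simp: prod_eq_iff; presburger)
  have "\<exists>\<gamma>\<in>G. \<gamma> ` (- X (i, False)) \<subseteq> X (i, True)" for i
    using vigorous_maps_compl_into[OF \<open>vigorous G\<close>, of "X (i, True)" "X (i, False)"]
      X_disjoint clopen_C_first_one indicator_in_first_one
    by (metis X_def empty_iff prod.inject)
  then obtain g where g: "\<And>i. g i \<in> G" "\<And>i. g i ` (- X (i, False)) \<subseteq> X (i, True)"
    by metis
  have maps: "letter_map g a ` (- X (letter_inv a)) \<subseteq> X a" for a
    using g(2) inv_image_compl_subset[OF homeo_subgroup_surj[OF assms(1) g(1)] g(2)]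
    by (cases a) (auto simp: letter_map_def letter_inv_def)
  have outside: "(\<lambda>m. m = 0) \<notin> X a" for a
    using first_one_disjoint[of 0] indicator_in_first_one[of 0] by (auto simp: X_def)
  show ?thesis
    unfolding lawless_def
    using word_eval_pingpong_not_id[OF X_disjoint maps outside] g(1) by blast
qed

end
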